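(* Let $C$ be a maximal cap in $AG(4,3)$ with anchor point $a$. Then $C$ is the union of $10$ $a$-lines, and every point $p \in AG(4,3)\setminus (C\cup\{a\})$ completes exactly three lines with pairs of points of $C$.
   Context: $AG(4,3)$ is the affine space $\mathbb{F}_3^4$; a line is a set of three distinct points $\{x,y,z\}$ with $x+y+z=0$. A cap is a set of points containing no line; a maximal cap is a cap of largest possible size (in $AG(4,3)$ this size is $20$). Every maximal cap $C$ in $AG(4,3)$ has a unique anchor point $a\notin C$ such that $C$ is a union of pairs $\{b,c\}$ with $\{a,b,c\}$ a line. For a point $a$, an $a$-line is a pair of points $\{b,c\}$ such that $\{a,b,c\}$ is a line. For a set $S$ and a point $p\notin S$, $p$ completes a line with a pair of points of $S$ if there are distinct $x,y\in S$ with $\{p,x,y\}$ a line; the number of lines $p$ completes with $S$ is the number of such unordered pairs $\{x,y\}$. *)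

theory Defs
  imports "HOL-Analysis.Finite_Cartesian_Product" "HOL-Library.Numeral_Type"
begin

text \<open>Points of AG(4,3) = F_3^4: vectors with 4 coordinates in the field Z/3 (numeral type 3).\<close>
type_synonym pt = "3 ^ 4"

definition is_line :: "pt set \<Rightarrow> bool" where
  "is_line L \<longleftrightarrow> (\<exists>x y z. L = {x, y, z} \<and> x \<noteq> y \<and> x \<noteq> z \<and> y \<noteq> z \<and> x + y + z = 0)"

definition is_cap :: "pt set \<Rightarrow> bool" where
  "is_cap C \<longleftrightarrow> (\<forall>L. L \<subseteq> C \<longrightarrow> \<not> is_line L)"

definition is_maximal_cap :: "pt set \<Rightarrow> bool" where
  "is_maximal_cap C \<longleftrightarrow> is_cap C \<and> (\<forall>D. is_cap D \<longrightarrow> card D \<le> card C)"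

definition a_line :: "pt \<Rightarrow> pt set \<Rightarrow> bool" where
  "a_line a P \<longleftrightarrow> (\<exists>b c. P = {b, c} \<and> b \<noteq> c \<and> is_line {a, b, c})"

definition is_anchor :: "pt \<Rightarrow> pt set \<Rightarrow> bool" where
  "is_anchor a C \<longleftrightarrow> a \<notin> C \<and> C = \<Union>{P. a_line a P \<and> P \<subseteq> C}"

definition lines_completed :: "pt \<Rightarrow> pt set \<Rightarrow> nat" where
  "lines_completed p S = card {P. \<exists>x y. P = {x, y} \<and> x \<in> S \<and> y \<in> S \<and> x \<noteq> y \<and> is_line {p, x, y}}"

end

theory Submission
  imports Defs
begin

text \<open>Translating by \<open>- a\<close> turns \<open>C\<close> into a cap \<open>K\<close> with \<open>0 \<notin> K = - K\<close>. Points of such a \<open>K\<close>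
  that are pairwise different up to sign are linearly independent, so the first three moments of
  the hyperplane section sizes \<open>n\<^sub>w = |K \<inter> w\<^sup>\<bottom>|\<close> are polynomials in \<open>m = |K|\<close>. The same
  counting inside a hyperplane, with a parity argument, gives \<open>n\<^sub>w \<le> 8\<close> for \<open>w \<noteq> 0\<close>; then
  summing \<open>(n\<^sub>w - 2)\<^sup>2 (8 - n\<^sub>w) \<ge> 0\<close> yields \<open>m \<le> 20\<close>, with equality only if every
  \<open>n\<^sub>w\<close> is \<open>2\<close> or \<open>8\<close>. An elliptic quadric contains a cap of size \<open>20\<close>, so \<open>|C| = 20\<close>,
  i.e. \<open>C\<close> is made of \<open>10\<close> \<open>a\<close>-lines. For \<open>p \<notin> C \<union> {a}\<close>, the pairs of \<open>C\<close> completing a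
  line with \<open>p\<close> correspond to the \<open>x \<in> K\<close> with \<open>(p - a) + x \<in> K\<close>, and the first two moments
  of \<open>n\<^sub>w\<close> over \<open>w \<perp> p - a\<close>, together with \<open>n\<^sub>w \<in> {2, 8}\<close>, show that there are \<open>6\<close> of
  them, i.e. \<open>3\<close> pairs.\<close>

section \<open>Arithmetic in the field with three elements\<close>

lemma UNIV_mod3: "(UNIV :: 3 set) = {0, 1, 2}"
  by (rule sym, rule card_seteq) auto

lemma forall_mod3: "(\<forall>c::3. P c) \<longleftrightarrow> P 0 \<and> P 1 \<and> P 2"
  by (metis UNIV_I UNIV_mod3 empty_iff insert_iff)

lemma sum_UNIV_mod3: "sum f (UNIV :: 3 set) = f 0 + f 1 + f 2"
  unfolding UNIV_mod3 by (simp add: add.assoc)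

lemma pt_two: "(2::pt) = - 1"
  by (simp add: vec_eq_iff)

lemma pt_add_self: "(x::pt) + x = - x"
  by (simp add: mult_2[symmetric] pt_two)

lemma pt_add_self_self: "(x::pt) + x + x = 0"
  by (simp add: pt_add_self)

lemma pt_eq_neg_iff: "(x::pt) = - x \<longleftrightarrow> x = 0"
  by (metis add.inverse_neutral eq_neg_iff_add_eq_0 neg_equal_zero pt_add_self)

lemma pt_eq_neg_diff_iff: "(x::pt) = - p - x \<longleftrightarrow> x = p"
  by (simp add: eq_diff_eq pt_add_self)

lemma mod3_three: "(3::3) = 0"
  by simp

lemma smult_2: "(2::3) *s x = - x"
  by (simp add: vec_eq_iff mod3_three)

section \<open>Lines and caps\<close>

lemma is_line_insert_iff:
  "is_line {a, b, c} \<longleftrightarrow> a \<noteq> b \<and> a \<noteq> c \<and> b \<noteq> c \<and> a + b + c = 0"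
proof
  assume "is_line {a, b, c}"
  then obtain x y z where eq: "{a, b, c} = {x, y, z}" and xyz: "x \<noteq> y" "x \<noteq> z" "y \<noteq> z"
    and sum: "x + y + z = 0"
    unfolding is_line_def by blast
  have "card {a, b, c} = 3" using eq xyz by simp
  then have abc: "a \<noteq> b \<and> a \<noteq> c \<and> b \<noteq> c" by (auto simp: card_insert_if split: if_splits)
  have "sum id {a, b, c} = sum id {x, y, z}" using eq by simp
  then show "a \<noteq> b \<and> a \<noteq> c \<and> b \<noteq> c \<and> a + b + c = 0"
    using abc xyz sum by (simp add: add.assoc)
qed (auto simp: is_line_def)

lemma is_capD:
  assumes "is_cap K" "x \<in> K" "y \<in> K" "z \<in> K" "x \<noteq> y" "x \<noteq> z" "y \<noteq> z" "x + y + z = 0"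
  shows False
  using assms unfolding is_cap_def by (metis is_line_insert_iff empty_subsetI insert_subset)

lemma is_cap_translate:
  assumes "is_cap C"
  shows "is_cap ((\<lambda>x. x + t) ` C)"
  unfolding is_cap_def
proof (intro allI impI notI)
  fix L assume sub: "L \<subseteq> (\<lambda>x. x + t) ` C" and "is_line L"
  then obtain x y z where L: "L = {x, y, z}" and xyz: "x \<noteq> y" "x \<noteq> z" "y \<noteq> z"
    and sum: "x + y + z = 0"
    unfolding is_line_def by blast
  have "(x - t) + (y - t) + (z - t) = 0"
    using sum pt_add_self_self[of t] by (simp add: algebra_simps)
  then show False
    using is_capD[OF assms, of "x - t" "y - t" "z - t"] sub L xyz by auto
qed

section \<open>Counting\<close>

lemma card_involution_pairs:
  assumes "finite A" and "\<And>x. x \<in> A \<Longrightarrow> f x \<in> A" and "\<And>x. x \<in> A \<Longrightarrow> f x \<noteq> x"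
    and "\<And>x. x \<in> A \<Longrightarrow> f (f x) = x"
  shows "2 * card ((\<lambda>x. {x, f x}) ` A) = card A"
proof -
  let ?P = "(\<lambda>x. {x, f x}) ` A"
  have f_eq_iff: "f x = f y \<longleftrightarrow> x = y" if "x \<in> A" "y \<in> A" for x y
    by (metis assms(4) that)
  have "2 * card ?P = card (\<Union>?P)"
  proof (rule card_partition)
    show "finite ?P" "finite (\<Union>?P)" using assms(1,2) by auto
    show "card c = 2" if "c \<in> ?P" for c using that assms(3) by (auto simp: card_2_iff)
    show "c1 \<inter> c2 = {}" if c: "c1 \<in> ?P" "c2 \<in> ?P" "c1 \<noteq> c2" for c1 c2
    proof -
      obtain x y where xy: "x \<in> A" "y \<in> A" "c1 = {x, f x}" "c2 = {y, f y}" using c(1,2) by blast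
      then show ?thesis using c(3) f_eq_iff by (auto simp: assms(4) insert_commute)
    qed
  qed
  moreover have "\<Union>?P = A" using assms(2) by auto
  ultimately show ?thesis by simp
qed

lemma even_card_uminus_closed:
  fixes A :: "pt set"
  assumes "\<And>x. x \<in> A \<Longrightarrow> - x \<in> A" and "0 \<notin> A"
  shows "even (card A)"
proof -
  have "2 * card ((\<lambda>x. {x, - x}) ` A) = card A"
  proof (rule card_involution_pairs)
    show "- x \<noteq> x" if "x \<in> A" for x
      using that assms(2) pt_eq_neg_iff[of x] by auto
  qed (simp_all add: assms(1))
  from this [symmetric] show ?thesis by simp
qed

lemma card_filter_int: "finite A \<Longrightarrow> int (card {x\<in>A. P x}) = (\<Sum>x\<in>A. if P x then 1 else 0)"
  by (simp add: sum.If_cases Int_def)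

lemma sum_if_mem_int:
  assumes "finite K"
  shows "(\<Sum>z\<in>K. if z \<in> A then (a::int) else b)
    = a * int (card (K \<inter> A)) + b * (int (card K) - int (card (K \<inter> A)))"
proof -
  have "(\<Sum>z\<in>K. if z \<in> A then a else b) = (\<Sum>z\<in>K \<inter> A. a) + (\<Sum>z\<in>K - A. b)"
    using assms by (simp add: sum.If_cases Diff_eq)
  moreover have "card (K - A) = card K - card (K \<inter> A)"
    using assms by (simp add: card_Diff_subset_Int)
  moreover have "card (K \<inter> A) \<le> card K" using assms by (simp add: card_mono)
  ultimately show ?thesis by simp
qed

lemma if_mult_if_int: "(if A then (1::int) else 0) * (if B then 1 else 0) = (if A \<and> B then 1 else 0)"
  by simp

lemma sum_card_filter_swap:
  assumes "finite U" "finite K"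
  shows "(\<Sum>w\<in>U. int (card {x\<in>K. P w x})) = (\<Sum>x\<in>K. int (card {w\<in>U. P w x}))"
  using assms by (simp add: card_filter_int sum.swap[of _ U])

lemma sum_card_filter_power2:
  assumes "finite U" "finite K"
  shows "(\<Sum>w\<in>U. int (card {x\<in>K. P w x})^2)
    = (\<Sum>x\<in>K. \<Sum>y\<in>K. int (card {w\<in>U. P w x \<and> P w y}))"
proof -
  have "(\<Sum>w\<in>U. int (card {x\<in>K. P w x})^2)
      = (\<Sum>w\<in>U. \<Sum>x\<in>K. \<Sum>y\<in>K. if P w x \<and> P w y then 1 else 0)"
    using assms
    by (simp only: card_filter_int power2_eq_square sum_distrib_left sum_distrib_right
        if_mult_if_int) (intro sum.cong refl; simp add: conj_commute conj_left_commute)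
  also have "\<dots> = (\<Sum>x\<in>K. \<Sum>y\<in>K. \<Sum>w\<in>U. if P w x \<and> P w y then 1 else 0)"
    by (simp only: sum.swap[of _ U])
  finally show ?thesis using assms by (simp add: card_filter_int)
qed

lemma sum_card_filter_power3:
  assumes "finite U" "finite K"
  shows "(\<Sum>w\<in>U. int (card {x\<in>K. P w x})^3)
    = (\<Sum>x\<in>K. \<Sum>y\<in>K. \<Sum>z\<in>K. int (card {w\<in>U. P w x \<and> P w y \<and> P w z}))"
proof -
  have "(\<Sum>w\<in>U. int (card {x\<in>K. P w x})^3)
      = (\<Sum>w\<in>U. \<Sum>x\<in>K. \<Sum>y\<in>K. \<Sum>z\<in>K. if P w x \<and> P w y \<and> P w z then 1 else 0)"
    using assms
    by (simp only: card_filter_int power3_eq_cube sum_distrib_left sum_distrib_right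
        if_mult_if_int) (intro sum.cong refl; simp add: conj_commute conj_left_commute)
  also have "\<dots> = (\<Sum>x\<in>K. \<Sum>y\<in>K. \<Sum>z\<in>K. \<Sum>w\<in>U. if P w x \<and> P w y \<and> P w z then 1 else 0)"
    by (simp only: sum.swap[of _ U])
  finally show ?thesis using assms by (simp add: card_filter_int)
qed
section \<open>Orthogonal complements in \<open>F\<^sub>3\<^sup>4\<close>\<close>

definition dot :: "pt \<Rightarrow> pt \<Rightarrow> 3" where
  "dot w x = (\<Sum>i\<in>UNIV. w $ i * x $ i)"

lemma dot_add_left: "dot (x + y) w = dot x w + dot y w"
  by (simp add: dot_def distrib_right sum.distrib)

lemma dot_add_right: "dot w (x + y) = dot w x + dot w y"
  by (simp add: dot_def distrib_left sum.distrib)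

lemma dot_minus_left: "dot (- x) w = - dot x w"
  by (simp add: dot_def sum_negf)

lemma dot_minus_right: "dot w (- x) = - dot w x"
  by (simp add: dot_def sum_negf)

lemma dot_diff_left: "dot (x - y) w = dot x w - dot y w"
  by (simp add: dot_def left_diff_distrib sum_subtractf)

lemma dot_diff_right: "dot w (x - y) = dot w x - dot w y"
  by (simp add: dot_def right_diff_distrib sum_subtractf)

lemma dot_smult_left: "dot (c *s w) x = c * dot w x"
  by (simp add: dot_def sum_distrib_left mult.assoc)

lemma dot_smult_right: "dot w (c *s x) = c * dot w x"
  by (simp add: dot_def sum_distrib_left mult.left_commute)

lemma dot_commute: "dot w x = dot x w"
  by (simp add: dot_def mult.commute)

lemma dot_zero_left [simp]: "dot 0 w = 0"
  by (simp add: dot_def)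

lemma dot_zero_right [simp]: "dot w 0 = 0"
  by (simp add: dot_def)

lemmas dot_simps = dot_add_left dot_add_right dot_minus_left dot_minus_right
  dot_diff_left dot_diff_right dot_smult_left dot_smult_right

lemma card_orthogonal1:
  assumes "x \<noteq> 0"
  shows "card {w. dot w x = 0} = 27"
proof -
  obtain i where i: "x $ i \<noteq> 0" using assms by (auto simp: vec_eq_iff)
  define e where "e = axis i (x $ i)"
  have "dot e x = (\<Sum>j\<in>UNIV. if j = i then x $ i * x $ i else 0)"
    unfolding dot_def e_def by (rule sum.cong) (auto simp: axis_def)
  also have "\<dots> = 1" using i forall_mod3[of "\<lambda>c. c \<noteq> 0 \<longrightarrow> c * c = 1"] by simp
  finally have e: "dot e x = 1" .
  define F where "F s = {w. dot w x = s}" for s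
  have F_eq: "F s = (\<lambda>w. w + s *s e) ` F 0" for s
  proof (rule set_eqI, rule iffI)
    fix w assume "w \<in> F s"
    then have "w - s *s e \<in> F 0" by (simp add: F_def dot_simps e)
    then show "w \<in> (\<lambda>w. w + s *s e) ` F 0" by (rule rev_image_eqI) simp
  qed (auto simp: F_def dot_simps e)
  have card_F: "card (F s) = card (F 0)" for s
  proof -
    have "inj_on (\<lambda>w. w + s *s e) (F 0)" by (simp add: inj_on_def)
    then show ?thesis by (subst F_eq[of s]) (rule card_image)
  qed
  have UNIV_eq: "UNIV = F 0 \<union> F 1 \<union> F 2"
    using forall_mod3[of "\<lambda>c. \<forall>w. dot w x = c \<longrightarrow> w \<in> F 0 \<union> F 1 \<union> F 2"] by (auto simp: F_def)
  have "CARD(pt) = card (F 0) + card (F 1) + card (F 2)"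
    unfolding UNIV_eq
    by (subst card_Un_disjoint, auto simp: F_def, subst card_Un_disjoint, auto)
  then show ?thesis using card_F[of 1] card_F[of 2] by (simp add: F_def)
qed

definition lin_indep2 :: "pt \<Rightarrow> pt \<Rightarrow> bool" where
  "lin_indep2 x y \<longleftrightarrow> (\<forall>\<alpha> \<beta>. \<alpha> *s x + \<beta> *s y = 0 \<longrightarrow> \<alpha> = 0 \<and> \<beta> = 0)"

definition lin_indep3 :: "pt \<Rightarrow> pt \<Rightarrow> pt \<Rightarrow> bool" where
  "lin_indep3 x y z \<longleftrightarrow>
    (\<forall>\<alpha> \<beta> \<gamma>. \<alpha> *s x + \<beta> *s y + \<gamma> *s z = 0 \<longrightarrow> \<alpha> = 0 \<and> \<beta> = 0 \<and> \<gamma> = 0)"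

lemma lin_indep2I:
  assumes "x \<noteq> 0" "y \<notin> {0, x, - x}"
  shows "lin_indep2 x y"
  unfolding lin_indep2_def forall_mod3 using assms by (auto simp: smult_2 add_eq_0_iff)

lemma lin_indep3I:
  assumes "lin_indep2 x y" "z \<notin> {0, x, - x, y, - y, x + y, x - y, y - x, - x - y}"
  shows "lin_indep3 x y z"
  using assms unfolding lin_indep2_def lin_indep3_def forall_mod3
  by (auto simp: smult_2 add_eq_0_iff) 

lemma count_roots_linear1:
  "(\<Sum>\<gamma>\<in>UNIV. if t + \<gamma> * c = (0::3) then 1 else 0)
    = (if c = 0 then (if t = 0 then 3 else 0) else (1::nat))"
proof -
  have "t \<in> {0, 1, 2}" "c \<in> {0, 1, 2}" using UNIV_mod3 by auto
  then show ?thesis by (auto simp: sum_UNIV_mod3)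
qed

lemma count_roots_linear2:
  "(\<Sum>\<alpha>\<in>UNIV. \<Sum>\<beta>\<in>UNIV. if \<alpha> * a + \<beta> * b = (0::3) then 1 else 0)
    = (if a = 0 \<and> b = 0 then 9 else (3::nat))"
proof -
  have "a \<in> {0, 1, 2}" using UNIV_mod3 by auto
  then show ?thesis by (simp only: count_roots_linear1) (auto simp: sum_UNIV_mod3)
qed

lemma count_roots_linear3:
  "(\<Sum>\<alpha>\<in>UNIV. \<Sum>\<beta>\<in>UNIV. \<Sum>\<gamma>\<in>UNIV. if \<alpha> * a + \<beta> * b + \<gamma> * c = (0::3) then 1 else 0)
    = (if a = 0 \<and> b = 0 \<and> c = 0 then 27 else (9::nat))"
proof (cases "c = 0")
  case True
  then have "(\<Sum>\<alpha>\<in>UNIV. \<Sum>\<beta>\<in>UNIV. \<Sum>\<gamma>\<in>UNIV. if \<alpha> * a + \<beta> * b + \<gamma> * c = (0::3) then 1 else 0)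
      = 3 * (\<Sum>\<alpha>\<in>UNIV. \<Sum>\<beta>\<in>UNIV. if \<alpha> * a + \<beta> * b = (0::3) then 1 else (0::nat))"
    by (simp add: sum_distrib_left)
  then show ?thesis using True by (simp add: count_roots_linear2)
next
  case False
  then show ?thesis by (simp only: count_roots_linear1) (simp add: sum_UNIV_mod3)
qed

lemma card_eq_sum_indicator: "card {w::pt. P w} = (\<Sum>w\<in>UNIV. if P w then 1 else 0)"
  by (simp add: sum.If_cases)

lemma sum_if_const_nat: "(\<Sum>w\<in>(UNIV::pt set). if P w then (c::nat) else 0) = c * card {w. P w}"
  by (simp add: sum.If_cases Int_def mult.commute)

text \<open>Summing the hyperplane count over all combinations \<open>\<alpha> x + \<beta> y\<close> counts each \<open>w\<close> \<open>9\<close>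
  times if \<open>w \<perp> x, y\<close> and \<open>3\<close> times otherwise.\<close>

lemma card_orthogonal2:
  assumes "lin_indep2 x y"
  shows "card {w. dot w x = 0 \<and> dot w y = 0} = 9"
proof -
  have "card {w. dot w (\<alpha> *s x + \<beta> *s y) = 0} = (if \<alpha> = 0 \<and> \<beta> = 0 then 81 else 27)" for \<alpha> \<beta>
    using assms card_orthogonal1 unfolding lin_indep2_def by auto
  then have "(297::nat) = (\<Sum>\<alpha>\<in>UNIV. \<Sum>\<beta>\<in>UNIV. card {w. dot w (\<alpha> *s x + \<beta> *s y) = 0})"
    by (simp add: sum_UNIV_mod3)
  also have "\<dots> = (\<Sum>\<alpha>\<in>UNIV. \<Sum>\<beta>\<in>UNIV. \<Sum>w\<in>UNIV. if \<alpha> * dot w x + \<beta> * dot w y = 0 then 1 else 0)"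
    by (simp add: card_eq_sum_indicator dot_simps)
  also have "\<dots> = (\<Sum>w\<in>UNIV. \<Sum>\<alpha>\<in>UNIV. \<Sum>\<beta>\<in>UNIV. if \<alpha> * dot w x + \<beta> * dot w y = 0 then 1 else 0)"
    by (simp only: sum.swap[of _ "UNIV :: pt set"])
  also have "\<dots> = (\<Sum>w\<in>UNIV. (if dot w x = 0 \<and> dot w y = 0 then 6 else 0) + 3)"
    unfolding count_roots_linear2 by (rule sum.cong) auto
  also have "\<dots> = 6 * card {w. dot w x = 0 \<and> dot w y = 0} + 243"
    by (simp only: sum.distrib sum_if_const_nat) simp
  finally show ?thesis by simp
qed

lemma card_orthogonal3:
  assumes "lin_indep3 x y z"
  shows "card {w. dot w x = 0 \<and> dot w y = 0 \<and> dot w z = 0} = 3"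
proof -
  have "card {w. dot w (\<alpha> *s x + \<beta> *s y + \<gamma> *s z) = 0}
      = (if \<alpha> = 0 \<and> \<beta> = 0 \<and> \<gamma> = 0 then 81 else 27)" for \<alpha> \<beta> \<gamma>
    using assms card_orthogonal1 unfolding lin_indep3_def by auto
  then have "(783::nat)
      = (\<Sum>\<alpha>\<in>UNIV. \<Sum>\<beta>\<in>UNIV. \<Sum>\<gamma>\<in>UNIV. card {w. dot w (\<alpha> *s x + \<beta> *s y + \<gamma> *s z) = 0})"
    by (simp add: sum_UNIV_mod3)
  also have "\<dots> = (\<Sum>\<alpha>\<in>UNIV. \<Sum>\<beta>\<in>UNIV. \<Sum>\<gamma>\<in>UNIV. \<Sum>w\<in>UNIV.
      if \<alpha> * dot w x + \<beta> * dot w y + \<gamma> * dot w z = 0 then 1 else 0)"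
    by (simp add: card_eq_sum_indicator dot_simps)
  also have "\<dots> = (\<Sum>w\<in>UNIV. \<Sum>\<alpha>\<in>UNIV. \<Sum>\<beta>\<in>UNIV. \<Sum>\<gamma>\<in>UNIV.
      if \<alpha> * dot w x + \<beta> * dot w y + \<gamma> * dot w z = 0 then 1 else 0)"
    by (simp only: sum.swap[of _ "UNIV :: pt set"])
  also have "\<dots> = (\<Sum>w\<in>UNIV. (if dot w x = 0 \<and> dot w y = 0 \<and> dot w z = 0 then 18 else 0) + 9)"
    unfolding count_roots_linear3 by (rule sum.cong) auto
  also have "\<dots> = 18 * card {w. dot w x = 0 \<and> dot w y = 0 \<and> dot w z = 0} + 729"
    by (simp only: sum.distrib sum_if_const_nat) simp
  finally show ?thesis by simp
qed

section \<open>Caps symmetric about the origin\<close>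

definition hsec :: "pt set \<Rightarrow> pt \<Rightarrow> pt set" where
  "hsec K w = {x \<in> K. dot w x = 0}"

locale symmetric_cap =
  fixes K :: "pt set"
  assumes cap: "is_cap K" and zero_notin: "0 \<notin> K" and uminus_mem: "x \<in> K \<Longrightarrow> - x \<in> K"
begin

lemma mem_neq_zero: "x \<in> K \<Longrightarrow> x \<noteq> 0"
  using zero_notin by auto

lemma uminus_mem_iff: "- x \<in> K \<longleftrightarrow> x \<in> K"
  using uminus_mem by force

lemma mem_lin_indep2: "x \<in> K \<Longrightarrow> y \<in> K \<Longrightarrow> y \<notin> {x, - x} \<Longrightarrow> lin_indep2 x y"
  by (rule lin_indep2I) (use mem_neq_zero in auto)

text \<open>If \<open>z = \<plusminus>x \<plusminus> y\<close>, then three of \<open>\<plusminus>x, \<plusminus>y, \<plusminus>z \<in> K\<close> sum to zero.\<close>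

lemma mem_lin_indep3:
  assumes K: "x \<in> K" "y \<in> K" "z \<in> K" and y: "y \<notin> {x, - x}" and z: "z \<notin> {x, - x, y, - y}"
  shows "lin_indep3 x y z"
proof (rule lin_indep3I)
  show "lin_indep2 x y" by (rule mem_lin_indep2[OF K(1,2) y])
  have line: False if "u \<in> K" "v \<in> K" "t \<in> K" "u \<noteq> v" "u \<noteq> t" "v \<noteq> t" "u + v + t = 0" for u v t
    using is_capD[OF cap] that by blast
  have "z \<noteq> - x - y"
    using line[of x y z] K y z by (auto simp: pt_eq_neg_diff_iff)
  moreover have "z \<noteq> x + y"
    using line[of x y "- z"] K y z uminus_mem by (force simp: pt_eq_neg_diff_iff)
  moreover have "z \<noteq> x - y"
    using line[of x "- y" "- z"] K y z uminus_mem by (force simp: pt_eq_neg_diff_iff)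
  moreover have "z \<noteq> y - x"
    using line[of "- x" y "- z"] K y z uminus_mem by (force simp: pt_eq_neg_diff_iff)
  ultimately show "z \<notin> {0, x, - x, y, - y, x + y, x - y, y - x, - x - y}"
    using z mem_neq_zero[OF K(3)] by auto
qed

lemma card_orthogonal_pair:
  assumes "x \<in> K" "y \<in> K"
  shows "card {w. dot w x = 0 \<and> dot w y = 0} = (if y \<in> {x, - x} then 27 else 9)"
proof (cases "y \<in> {x, - x}")
  case True
  then have "{w. dot w x = 0 \<and> dot w y = 0} = {w. dot w x = 0}" by (auto simp: dot_simps)
  then show ?thesis using True card_orthogonal1 mem_neq_zero[OF assms(1)] by auto
next
  case False
  then show ?thesis using card_orthogonal2 mem_lin_indep2[OF assms] by simp
qed

lemma card_orthogonal_triple: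
  assumes "x \<in> K" "y \<in> K" "z \<in> K"
  shows "card {w. dot w x = 0 \<and> dot w y = 0 \<and> dot w z = 0} =
    (if y \<in> {x, - x} then (if z \<in> {x, - x} then 27 else 9)
     else if z \<in> {x, - x, y, - y} then 9 else 3)"
proof (cases "y \<in> {x, - x}")
  case True
  then have "{w. dot w x = 0 \<and> dot w y = 0 \<and> dot w z = 0} = {w. dot w x = 0 \<and> dot w z = 0}"
    by (auto simp: dot_simps)
  then show ?thesis using True card_orthogonal_pair[OF assms(1,3)] by auto
next
  case y: False
  show ?thesis
  proof (cases "z \<in> {x, - x, y, - y}")
    case True
    then have "{w. dot w x = 0 \<and> dot w y = 0 \<and> dot w z = 0} = {w. dot w x = 0 \<and> dot w y = 0}"
      by (auto simp: dot_simps)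
    then show ?thesis using True y card_orthogonal_pair[OF assms(1,2)] by auto
  next
    case False
    then show ?thesis using y card_orthogonal3 mem_lin_indep3[OF assms] by simp
  qed
qed

lemma card_inter_pm: "x \<in> K \<Longrightarrow> card (K \<inter> {x, - x}) = 2"
  using uminus_mem mem_neq_zero pt_eq_neg_iff by (simp add: insert_absorb)

lemma card_inter_pm2:
  assumes "x \<in> K" "y \<in> K" "y \<notin> {x, - x}"
  shows "card (K \<inter> {x, - x, y, - y}) = 4"
proof -
  have "K \<inter> {x, - x, y, - y} = {x, - x, y, - y}" using assms uminus_mem by auto
  moreover have "x \<noteq> - x" "y \<noteq> - y" using assms(1,2) mem_neq_zero pt_eq_neg_iff by blast+
  moreover have "x \<noteq> - y" using assms(3) by auto
  ultimately show ?thesis using assms(3) by auto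
qed

lemma sum_if_mem_pm:
  "x \<in> K \<Longrightarrow> (\<Sum>y\<in>K. if y \<in> {x, - x} then (a::int) else b) = 2 * a + b * (int (card K) - 2)"
  unfolding sum_if_mem_int[OF finite] by (simp only: card_inter_pm) simp

lemma sum_if_mem_pm2:
  assumes "x \<in> K" "y \<in> K" "y \<notin> {x, - x}"
  shows "(\<Sum>z\<in>K. if z \<in> {x, - x, y, - y} then (a::int) else b) = 4 * a + b * (int (card K) - 4)"
  unfolding sum_if_mem_int[OF finite] card_inter_pm2[OF assms] by simp

lemma sum_card_hsec: "(\<Sum>w\<in>UNIV. int (card (hsec K w))) = 27 * int (card K)"
proof -
  have "(\<Sum>w\<in>UNIV. int (card (hsec K w))) = (\<Sum>x\<in>K. int (card {w\<in>UNIV. dot w x = 0}))"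
    unfolding hsec_def by (rule sum_card_filter_swap) auto
  also have "\<dots> = (\<Sum>x\<in>K. 27)" using card_orthogonal1 mem_neq_zero by (intro sum.cong) auto
  finally show ?thesis by simp
qed

lemma sum_card_hsec_power2:
  "(\<Sum>w\<in>UNIV. int (card (hsec K w))^2) = int (card K) * (9 * int (card K) + 36)"
proof -
  have "(\<Sum>w\<in>UNIV. int (card (hsec K w))^2)
      = (\<Sum>x\<in>K. \<Sum>y\<in>K. int (card {w\<in>UNIV. dot w x = 0 \<and> dot w y = 0}))"
    unfolding hsec_def by (rule sum_card_filter_power2) auto
  also have "\<dots> = (\<Sum>x\<in>K. \<Sum>y\<in>K. if y \<in> {x, - x} then 27 else 9)"
    using card_orthogonal_pair by (intro sum.cong refl) simp
  also have "\<dots> = (\<Sum>x\<in>K. 9 * int (card K) + 36)"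
    by (intro sum.cong refl) (subst sum_if_mem_pm, simp_all add: algebra_simps)
  finally show ?thesis by (simp add: algebra_simps)
qed

lemma sum_card_hsec_power3:
  "(\<Sum>w\<in>UNIV. int (card (hsec K w))^3)
    = int (card K) * (3 * int (card K)^2 + 36 * int (card K) + 24)"
proof -
  let ?m = "int (card K)"
  have "(\<Sum>w\<in>UNIV. int (card (hsec K w))^3) = (\<Sum>x\<in>K. \<Sum>y\<in>K. \<Sum>z\<in>K.
      int (card {w\<in>UNIV. dot w x = 0 \<and> dot w y = 0 \<and> dot w z = 0}))"
    unfolding hsec_def by (rule sum_card_filter_power3) auto
  also have "\<dots> = (\<Sum>x\<in>K. \<Sum>y\<in>K. if y \<in> {x, - x} then 9 * ?m + 36 else 3 * ?m + 24)"
  proof (intro sum.cong refl)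
    fix x y assume xy: "x \<in> K" "y \<in> K"
    show "(\<Sum>z\<in>K. int (card {w\<in>UNIV. dot w x = 0 \<and> dot w y = 0 \<and> dot w z = 0}))
        = (if y \<in> {x, - x} then 9 * ?m + 36 else 3 * ?m + 24)"
    proof (cases "y \<in> {x, - x}")
      case True
      then have "(\<Sum>z\<in>K. int (card {w\<in>UNIV. dot w x = 0 \<and> dot w y = 0 \<and> dot w z = 0}))
          = (\<Sum>z\<in>K. if z \<in> {x, - x} then 27 else 9)"
        using card_orthogonal_triple[OF xy] by (intro sum.cong refl) simp
      then show ?thesis using True by (subst (asm) sum_if_mem_pm[OF xy(1)]) (simp add: algebra_simps)
    next
      case False
      then have "(\<Sum>z\<in>K. int (card {w\<in>UNIV. dot w x = 0 \<and> dot w y = 0 \<and> dot w z = 0}))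
          = (\<Sum>z\<in>K. if z \<in> {x, - x, y, - y} then 9 else 3)"
        using card_orthogonal_triple[OF xy] by (intro sum.cong refl) simp
      then show ?thesis using False by (subst (asm) sum_if_mem_pm2[OF xy False]) (simp add: algebra_simps)
    qed
  qed
  also have "\<dots> = (\<Sum>x\<in>K. (9 * ?m + 36) * 2 + (3 * ?m + 24) * (?m - 2))"
    by (intro sum.cong refl) (subst sum_if_mem_pm, simp_all)
  finally show ?thesis by (simp add: algebra_simps power2_eq_square)
qed

end

lemma card_diff_origin_line:
  fixes w :: pt
  assumes "w \<noteq> 0" "{0, w, - w} \<subseteq> U"
  shows "card (U - {0, w, - w}) = card U - 3"
proof -
  have "card {0, w, - w} = 3" using assms(1) pt_eq_neg_iff[of w] by auto
  then show ?thesis using assms(2) by (simp add: card_Diff_subset)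
qed

context symmetric_cap
begin

lemma symmetric_cap_hsec: "symmetric_cap (hsec K w)"
proof
  show "is_cap (hsec K w)" using cap unfolding is_cap_def hsec_def by blast
qed (use zero_notin uminus_mem in \<open>auto simp: hsec_def dot_minus_right\<close>)

lemma card_hsec_hsec_le_4:
  assumes w: "w \<noteq> 0" and v: "v \<notin> {0, w, - w}"
  shows "card (hsec (hsec K w) v) \<le> 4"
proof (rule ccontr)
  let ?E = "hsec (hsec K w) v"
  assume "\<not> ?thesis"
  then have E: "4 < card ?E" by simp
  have not_sub: "\<not> ?E \<subseteq> {a, b, c, d}" for a b c d
    using E card_mono[of "{a, b, c, d}" ?E] card_length[of "[a, b, c, d]"] by auto
  obtain x where x: "x \<in> ?E" using not_sub[of 0 0 0 0] by blast
  obtain y where y: "y \<in> ?E" "y \<notin> {x, - x}" using not_sub[of x "- x" x x] by blast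
  obtain z where z: "z \<in> ?E" "z \<notin> {x, - x, y, - y}" using not_sub[of x "- x" y "- y"] by blast
  let ?U = "{u. dot u x = 0 \<and> dot u y = 0 \<and> dot u z = 0}"
  have "lin_indep3 x y z" using x y z by (intro mem_lin_indep3) (auto simp: hsec_def)
  then have "card ?U = 3" by (rule card_orthogonal3)
  moreover have "{0, v, w, v + w} \<subseteq> ?U"
    using x y z by (auto simp: hsec_def dot_add_left)
  moreover have "v + w \<noteq> 0" using v by (auto simp: add_eq_0_iff)
  then have "card {0, v, w, v + w} = 4" using w v by auto
  ultimately show False using card_mono[of ?U "{0, v, w, v + w}"] by simp
qed

text \<open>The planes inside \<open>w\<^sup>\<bottom>\<close> are the \<open>w\<^sup>\<bottom> \<inter> v\<^sup>\<bottom>\<close> with \<open>v \<notin> {0, w, - w}\<close>.\<close>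

lemma sum_card_hsec_hsec:
  assumes w: "w \<noteq> 0"
  shows "(\<Sum>v\<in>- {0, w, - w}. int (card (hsec (hsec K w) v))) = 24 * int (card (hsec K w))"
    and "(\<Sum>v\<in>- {0, w, - w}. int (card (hsec (hsec K w) v))^2)
      = int (card (hsec K w)) * (6 * int (card (hsec K w)) + 36)"
proof -
  let ?T = "- {0, w, - w}" and ?D = "hsec K w"
  interpret D: symmetric_cap ?D by (rule symmetric_cap_hsec)
  have Dw: "x \<in> ?D \<Longrightarrow> dot w x = 0" for x by (simp add: hsec_def)
  have "(\<Sum>v\<in>?T. int (card (hsec ?D v))) = (\<Sum>x\<in>?D. int (card {v\<in>?T. dot v x = 0}))"
    unfolding hsec_def[of ?D] by (rule sum_card_filter_swap) auto
  also have "\<dots> = (\<Sum>x\<in>?D. 24)"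
  proof (intro sum.cong refl)
    fix x assume x: "x \<in> ?D"
    have "{v\<in>?T. dot v x = 0} = {v. dot v x = 0} - {0, w, - w}" by auto
    moreover have "{0, w, - w} \<subseteq> {v. dot v x = 0}" using Dw[OF x] by (simp add: dot_minus_left)
    ultimately show "int (card {v\<in>?T. dot v x = 0}) = 24"
      using card_diff_origin_line[OF w] card_orthogonal1[OF D.mem_neq_zero[OF x]] by simp
  qed
  finally show "(\<Sum>v\<in>?T. int (card (hsec ?D v))) = 24 * int (card ?D)" by simp
  have "(\<Sum>v\<in>?T. int (card (hsec ?D v))^2)
      = (\<Sum>x\<in>?D. \<Sum>y\<in>?D. int (card {v\<in>?T. dot v x = 0 \<and> dot v y = 0}))"
    unfolding hsec_def[of ?D] by (rule sum_card_filter_power2) auto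
  also have "\<dots> = (\<Sum>x\<in>?D. \<Sum>y\<in>?D. if y \<in> {x, - x} then 24 else 6)"
  proof (intro sum.cong refl)
    fix x y assume xy: "x \<in> ?D" "y \<in> ?D"
    have "{v\<in>?T. dot v x = 0 \<and> dot v y = 0} = {v. dot v x = 0 \<and> dot v y = 0} - {0, w, - w}" by auto
    moreover have "{0, w, - w} \<subseteq> {v. dot v x = 0 \<and> dot v y = 0}"
      using Dw[OF xy(1)] Dw[OF xy(2)] by (simp add: dot_minus_left)
    ultimately show "int (card {v\<in>?T. dot v x = 0 \<and> dot v y = 0}) = (if y \<in> {x, - x} then 24 else 6)"
      using card_diff_origin_line[OF w] D.card_orthogonal_pair[OF xy] by simp
  qed
  also have "\<dots> = (\<Sum>x\<in>?D. 6 * int (card ?D) + 36)"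
    by (intro sum.cong refl) (subst D.sum_if_mem_pm, simp_all add: algebra_simps)
  finally show "(\<Sum>v\<in>?T. int (card (hsec ?D v))^2) = int (card ?D) * (6 * int (card ?D) + 36)"
    by (simp add: algebra_simps)
qed

lemma sum_card_hsec_hsec_defect:
  assumes "w \<noteq> 0"
  shows "(\<Sum>v\<in>- {0, w, - w}. int (card (hsec (hsec K w) v)) * (4 - int (card (hsec (hsec K w) v))))
    = 6 * int (card (hsec K w)) * (10 - int (card (hsec K w)))"
proof -
  let ?g = "\<lambda>v. int (card (hsec (hsec K w) v))" and ?d = "int (card (hsec K w))"
  have "(\<Sum>v\<in>- {0, w, - w}. ?g v * (4 - ?g v))
      = 4 * (\<Sum>v\<in>- {0, w, - w}. ?g v) - (\<Sum>v\<in>- {0, w, - w}. ?g v ^ 2)"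
    by (simp add: right_diff_distrib power2_eq_square sum_subtractf sum_distrib_left mult.commute)
  also have "\<dots> = 4 * (24 * ?d) - ?d * (6 * ?d + 36)"
    by (simp only: sum_card_hsec_hsec[OF assms])
  finally show ?thesis by (simp add: algebra_simps)
qed

lemma card_hsec_le_10: "w \<noteq> 0 \<Longrightarrow> card (hsec K w) \<le> 10"
proof -
  assume w: "w \<noteq> 0"
  have "0 \<le> (\<Sum>v\<in>- {0, w, - w}. int (card (hsec (hsec K w) v)) * (4 - int (card (hsec (hsec K w) v))))"
    using card_hsec_hsec_le_4[OF w] by (intro sum_nonneg) simp
  then have "0 \<le> int (card (hsec K w)) * (10 - int (card (hsec K w)))"
    using sum_card_hsec_hsec_defect[OF w] by simp
  then show ?thesis by (cases "card (hsec K w) = 0") (auto simp: zero_le_mult_iff)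
qed

end

context symmetric_cap
begin

lemma card_hsec_hsec_0_or_4:
  assumes w: "w \<noteq> 0" and d: "card (hsec K w) = 10" and v: "v \<notin> {0, w, - w}"
  shows "card (hsec (hsec K w) v) = 0 \<or> card (hsec (hsec K w) v) = 4"
proof -
  let ?g = "\<lambda>v. int (card (hsec (hsec K w) v))"
  have "(\<Sum>v\<in>- {0, w, - w}. ?g v * (4 - ?g v)) = 0"
    using sum_card_hsec_hsec_defect[OF w] d by simp
  moreover have "\<forall>v\<in>- {0, w, - w}. 0 \<le> ?g v * (4 - ?g v)"
    using card_hsec_hsec_le_4[OF w] by simp
  ultimately have "\<forall>v\<in>- {0, w, - w}. ?g v * (4 - ?g v) = 0"
    using sum_nonneg_eq_0_iff[of "- {0, w, - w}" "\<lambda>v. ?g v * (4 - ?g v)"] by simp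
  then have "?g v * (4 - ?g v) = 0" using v by simp
  then show ?thesis by (simp only: mult_eq_0_iff) arith
qed

text \<open>If \<open>|K \<inter> w\<^sup>\<bottom>| = 10\<close>, pick \<open>x\<^sub>0 \<in> w\<^sup>\<bottom>\<close> outside \<open>K \<union> {0}\<close>. The planes of \<open>w\<^sup>\<bottom>\<close>
  through \<open>x\<^sub>0\<close> meet \<open>K\<close> in \<open>60\<close> points altogether, each in \<open>0\<close> or \<open>4\<close> points, so \<open>15\<close> of
  them meet \<open>K\<close>; but these planes come in pairs \<open>\<plusminus>v\<^sup>\<bottom>\<close>.\<close>

lemma card_hsec_neq_10:
  assumes w: "w \<noteq> 0"
  shows "card (hsec K w) \<noteq> 10"
proof
  assume d: "card (hsec K w) = 10"
  let ?D = "hsec K w"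
  let ?g = "\<lambda>v. card (hsec ?D v)"
  interpret D: symmetric_cap ?D by (rule symmetric_cap_hsec)
  have "card (insert 0 ?D) < card {u. dot w u = 0}"
    using card_orthogonal1[OF w] d card_insert_le_m1[of "card ?D"] by (simp add: dot_commute card_insert_if)
  then obtain x0 where x0: "dot w x0 = 0" "x0 \<noteq> 0" "x0 \<notin> K"
    using card_mono[of "insert 0 ?D" "{u. dot w u = 0}"] by (auto simp: hsec_def)
  have x0_pm: "x \<notin> {x0, - x0}" if "x \<in> ?D" for x
    using that x0 uminus_mem[of "- x0"] by (auto simp: hsec_def)
  define B where "B = {v \<in> - {0, w, - w}. dot v x0 = 0}"
  have "(\<Sum>v\<in>B. int (?g v)) = (\<Sum>x\<in>?D. int (card {v\<in>B. dot v x = 0}))"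
    unfolding hsec_def[of ?D] by (rule sum_card_filter_swap) auto
  also have "\<dots> = (\<Sum>x\<in>?D. 6)"
  proof (intro sum.cong refl)
    fix x assume x: "x \<in> ?D"
    have "{v\<in>B. dot v x = 0} = {v. dot v x0 = 0 \<and> dot v x = 0} - {0, w, - w}"
      by (auto simp: B_def)
    moreover have "{0, w, - w} \<subseteq> {v. dot v x0 = 0 \<and> dot v x = 0}"
      using x x0(1) by (simp add: hsec_def dot_minus_left)
    moreover have "lin_indep2 x0 x"
      using x0(2) x0_pm[OF x] D.mem_neq_zero[OF x] by (intro lin_indep2I) auto
    ultimately show "int (card {v\<in>B. dot v x = 0}) = 6"
      using card_diff_origin_line[OF w] card_orthogonal2 by simp
  qed
  also have "\<dots> = 60" using d by simp
  finally have "(\<Sum>v\<in>B. int (?g v)) = 60" .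
  moreover have "(\<Sum>v\<in>B. int (?g v)) = (\<Sum>v\<in>B. if ?g v = 4 then 4 else 0)"
    using card_hsec_hsec_0_or_4[OF w d] by (intro sum.cong refl) (force simp: B_def)
  ultimately have "card {v\<in>B. ?g v = 4} = 15"
    by (simp add: sum.If_cases Int_def)
  moreover have "even (card {v\<in>B. ?g v = 4})"
    by (rule even_card_uminus_closed) (auto simp: B_def hsec_def dot_minus_left)
  ultimately show False by simp
qed

lemma card_hsec_le_8:
  assumes "w \<noteq> 0"
  shows "card (hsec K w) \<le> 8"
proof -
  interpret D: symmetric_cap "hsec K w" by (rule symmetric_cap_hsec)
  have "even (card (hsec K w))"
    using D.uminus_mem D.zero_notin by (rule even_card_uminus_closed)
  then show ?thesis using card_hsec_le_10[OF assms] card_hsec_neq_10[OF assms]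
    by (auto elim!: evenE)
qed

lemma sum_cubic_card_hsec:
  "(\<Sum>w\<in>- {0}. (int (card (hsec K w)) - 2)^2 * (8 - int (card (hsec K w))))
    = - 2 * (int (card K) - 20) * ((int (card K) - 5)^2 + 39)"
proof -
  let ?n = "\<lambda>w. int (card (hsec K w))" and ?m = "int (card K)"
  define p :: "int \<Rightarrow> int" where "p t = (t - 2)^2 * (8 - t)" for t
  have p: "p t = 12 * t^2 - t^3 - 36 * t + 32" for t
    by (simp add: p_def algebra_simps power2_eq_square power3_eq_cube)
  have "(\<Sum>w\<in>UNIV. p (?n w))
      = 12 * (\<Sum>w\<in>UNIV. ?n w^2) - (\<Sum>w\<in>UNIV. ?n w^3) - 36 * (\<Sum>w\<in>UNIV. ?n w) + 32 * 81"
    by (simp add: p sum.distrib sum_subtractf sum_distrib_left)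
  also have "\<dots> = 12 * (?m * (9 * ?m + 36)) - ?m * (3 * ?m^2 + 36 * ?m + 24) - 36 * (27 * ?m) + 2592"
    by (simp only: sum_card_hsec sum_card_hsec_power2 sum_card_hsec_power3)
  finally have "(\<Sum>w\<in>UNIV. p (?n w)) = \<dots>" .
  moreover have "(\<Sum>w\<in>UNIV. p (?n w)) = p ?m + (\<Sum>w\<in>- {0}. p (?n w))"
    by (subst sum.remove[of UNIV 0]) (auto simp: hsec_def Compl_eq_Diff_UNIV)
  ultimately show ?thesis
    by (simp add: p_def algebra_simps power2_eq_square power3_eq_cube)
qed

lemma card_le_20: "card K \<le> 20"
proof -
  have "0 \<le> (\<Sum>w\<in>- {0}. (int (card (hsec K w)) - 2)^2 * (8 - int (card (hsec K w))))"
    using card_hsec_le_8 by (intro sum_nonneg) simp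
  then have "0 \<le> - 2 * (int (card K) - 20) * ((int (card K) - 5)^2 + 39)"
    by (simp only: sum_cubic_card_hsec)
  moreover have "0 < (int (card K) - 5)^2 + 39" by (simp add: add_nonneg_pos)
  ultimately show ?thesis by (simp add: mult_le_0_iff zero_le_mult_iff)
qed

lemma card_hsec_2_or_8:
  assumes "card K = 20" and "w \<noteq> 0"
  shows "card (hsec K w) = 2 \<or> card (hsec K w) = 8"
proof -
  let ?q = "\<lambda>w. (int (card (hsec K w)) - 2)^2 * (8 - int (card (hsec K w)))"
  have "(\<Sum>w\<in>- {0}. ?q w) = 0" using sum_cubic_card_hsec assms(1) by simp
  moreover have "\<forall>w\<in>- {0}. 0 \<le> ?q w" using card_hsec_le_8 by simp
  ultimately have "\<forall>w\<in>- {0}. ?q w = 0"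
    using sum_nonneg_eq_0_iff[of "- {0}" ?q] by simp
  then have "?q w = 0" using assms(2) by simp
  then show ?thesis by (simp only: mult_eq_0_iff power_eq_0_iff) arith
qed

end

context symmetric_cap
begin

lemma lin_indep2_nonmem:
  assumes "p \<noteq> 0" "p \<notin> K" "x \<in> K"
  shows "lin_indep2 p x"
  using assms uminus_mem_iff[of p] mem_neq_zero[OF assms(3)] by (intro lin_indep2I) auto

text \<open>The plane spanned by \<open>p\<close> and \<open>x\<close> consists of \<open>0, \<plusminus>p\<close> and the six points listed below.\<close>

lemma card_orthogonal_nonmem_pair:
  assumes p: "p \<noteq> 0" "p \<notin> K" and xy: "x \<in> K" "y \<in> K"
  shows "card {w. dot w p = 0 \<and> dot w x = 0 \<and> dot w y = 0}
    = (if y \<in> {x, - x, p + x, - (p + x), p - x, - (p - x)} then 9 else 3)"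
proof (cases "y \<in> {x, - x, p + x, - (p + x), p - x, - (p - x)}")
  case True
  then have "{w. dot w p = 0 \<and> dot w x = 0 \<and> dot w y = 0} = {w. dot w p = 0 \<and> dot w x = 0}"
    by (auto simp: dot_simps)
  then show ?thesis using True card_orthogonal2[OF lin_indep2_nonmem[OF p xy(1)]] by simp
next
  case False
  have "lin_indep3 p x y"
    using False p xy(2) uminus_mem_iff[of p] mem_neq_zero[OF xy(2)]
    by (intro lin_indep3I lin_indep2_nonmem[OF p xy(1)]) auto
  then show ?thesis using False card_orthogonal3 by simp
qed

lemma card_inter_pm_if: "card (K \<inter> {u, - u}) = (if u \<in> K then 2 else 0)"
proof (cases "u \<in> K")
  case True
  then show ?thesis using card_inter_pm[OF True] by (simp only: if_True)
next
  case False
  then show ?thesis using uminus_mem_iff[of u] by simp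
qed

lemma card_inter_nonmem_plane:
  assumes p: "p \<noteq> 0" "p \<notin> K" and x: "x \<in> K"
  shows "card (K \<inter> {x, - x, p + x, - (p + x), p - x, - (p - x)})
    = 2 + (if p + x \<in> K then 2 else 0) + (if p - x \<in> K then 2 else 0)"
proof -
  have pm_disjoint: "{u, - u} \<inter> {v, - v} = {}" if "u \<noteq> v" "u \<noteq> - v" for u v :: pt
    using that by auto
  have "x \<noteq> p" "x \<noteq> - p" "x \<noteq> 0" using p x uminus_mem_iff[of p] mem_neq_zero by auto
  then have "x \<noteq> p + x" "x \<noteq> - (p + x)" "x \<noteq> p - x" "x \<noteq> - (p - x)" "p + x \<noteq> p - x"
    "p + x \<noteq> - (p - x)"
    using p(1) pt_eq_neg_diff_iff[of x p] pt_eq_neg_diff_iff[of x "- p"] pt_eq_neg_iff[of x]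
      pt_eq_neg_iff[of p] by (auto simp: algebra_simps)
  note distinct = this
  let ?P1 = "{x, - x}" and ?P2 = "{p + x, - (p + x)}" and ?P3 = "{p - x, - (p - x)}"
  have "K \<inter> {x, - x, p + x, - (p + x), p - x, - (p - x)} = K \<inter> ?P1 \<union> K \<inter> ?P2 \<union> K \<inter> ?P3"
    by auto
  also have "card \<dots> = card (K \<inter> ?P1 \<union> K \<inter> ?P2) + card (K \<inter> ?P3)"
    using pm_disjoint[of x "p - x"] pm_disjoint[of "p + x" "p - x"] distinct
    by (intro card_Un_disjoint) auto
  also have "card (K \<inter> ?P1 \<union> K \<inter> ?P2) = card (K \<inter> ?P1) + card (K \<inter> ?P2)"
    using pm_disjoint[of x "p + x"] distinct by (intro card_Un_disjoint) auto
  finally show ?thesis using x by (simp only: card_inter_pm_if) simp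
qed

lemma sum_card_hsec_orthogonal:
  assumes m: "card K = 20" and p: "p \<noteq> 0" "p \<notin> K"
  shows "(\<Sum>w | dot w p = 0. int (card (hsec K w))) = 180"
proof -
  have "(\<Sum>w | dot w p = 0. int (card (hsec K w)))
      = (\<Sum>x\<in>K. int (card {w \<in> {w. dot w p = 0}. dot w x = 0}))"
    unfolding hsec_def by (rule sum_card_filter_swap) auto
  also have "\<dots> = (\<Sum>x\<in>K. 9)"
    using card_orthogonal2[OF lin_indep2_nonmem[OF p]] by (intro sum.cong refl) simp
  finally show ?thesis using m by simp
qed

lemma sum_card_hsec_orthogonal_power2:
  assumes m: "card K = 20" and p: "p \<noteq> 0" "p \<notin> K"
  shows "(\<Sum>w | dot w p = 0. int (card (hsec K w))^2) = 1440 + 24 * int (card {x\<in>K. p + x \<in> K})"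
proof -
  let ?A = "\<lambda>x. {x, - x, p + x, - (p + x), p - x, - (p - x)}"
  have "(\<Sum>w | dot w p = 0. int (card (hsec K w))^2)
      = (\<Sum>x\<in>K. \<Sum>y\<in>K. int (card {w \<in> {w. dot w p = 0}. dot w x = 0 \<and> dot w y = 0}))"
    unfolding hsec_def by (rule sum_card_filter_power2) auto
  also have "\<dots> = (\<Sum>x\<in>K. \<Sum>y\<in>K. if y \<in> ?A x then 9 else 3)"
    using card_orthogonal_nonmem_pair[OF p] by (intro sum.cong refl) simp
  also have "\<dots> = (\<Sum>x\<in>K. 72 + 12 * (if p + x \<in> K then 1 else 0) + 12 * (if p - x \<in> K then 1 else 0))"
  proof (intro sum.cong refl)
    fix x assume x: "x \<in> K"
    show "(\<Sum>y\<in>K. if y \<in> ?A x then 9 else 3)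
        = 72 + 12 * (if p + x \<in> K then 1 else 0) + 12 * (if p - x \<in> K then 1 else (0::int))"
      unfolding sum_if_mem_int[OF finite] card_inter_nonmem_plane[OF p x] using m by simp
  qed
  also have "\<dots> = 1440 + 12 * (\<Sum>x\<in>K. if p + x \<in> K then 1 else 0) + 12 * (\<Sum>x\<in>K. if p - x \<in> K then 1 else 0)"
    using m by (simp add: sum.distrib sum_distrib_left)
  also have "(\<Sum>x\<in>K. if p - x \<in> K then 1 else 0) = (\<Sum>x\<in>K. if p + x \<in> K then (1::int) else 0)"
    by (rule sum.reindex_bij_witness[of _ uminus uminus]) (auto simp: uminus_mem_iff)
  finally show ?thesis by (simp add: card_filter_int)
qed

text \<open>On the \<open>26\<close> nonzero \<open>w \<perp> p\<close> the section sizes \<open>n\<close> are \<open>2\<close> or \<open>8\<close>, so \<open>n\<^sup>2 = 10 n - 16\<close>;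
  comparing with the two moments above leaves exactly one value for the number of pairs.\<close>

lemma card_add_mem_eq_6:
  assumes m: "card K = 20" and p: "p \<noteq> 0" "p \<notin> K"
  shows "card {x\<in>K. p + x \<in> K} = 6"
proof -
  let ?W = "{w. dot w p = 0} - {0}" and ?n = "\<lambda>w. int (card (hsec K w))"
  have n0: "?n 0 = 20" using m by (simp add: hsec_def)
  have W: "card ?W = 26" using card_orthogonal1[OF p(1)] by simp
  have S1: "(\<Sum>w\<in>?W. ?n w) = 160"
    using sum_card_hsec_orthogonal[OF assms] sum.remove[of "{w. dot w p = 0}" 0 ?n] n0 by simp
  have S2: "(\<Sum>w\<in>?W. ?n w^2) = 1040 + 24 * int (card {x\<in>K. p + x \<in> K})"
    using sum_card_hsec_orthogonal_power2[OF assms] sum.remove[of "{w. dot w p = 0}" 0 "\<lambda>w. ?n w^2"] n0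
    by simp
  have "(\<Sum>w\<in>?W. ?n w^2) = (\<Sum>w\<in>?W. 10 * ?n w - 16)"
  proof (intro sum.cong refl)
    fix w assume "w \<in> ?W"
    then have "card (hsec K w) = 2 \<or> card (hsec K w) = 8" using card_hsec_2_or_8[OF m] by simp
    then show "?n w^2 = 10 * ?n w - 16" by auto
  qed
  also have "\<dots> = 1184" using S1 W by (simp add: sum_subtractf sum_distrib_left[symmetric])
  finally show ?thesis using S2 by simp
qed

end

section \<open>A cap of size 20\<close>

definition vec4 :: "3 \<Rightarrow> 3 \<Rightarrow> 3 \<Rightarrow> 3 \<Rightarrow> pt" where
  "vec4 a b c d = (\<chi> i. if i = 0 then a else if i = 1 then b else if i = 2 then c else d)"

lemma forall_4: "(\<forall>i::4. P i) \<longleftrightarrow> P 0 \<and> P 1 \<and> P 2 \<and> P 3"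
proof -
  have "(UNIV :: 4 set) = {0, 1, 2, 3}" by (rule sym, rule card_seteq) auto
  then show ?thesis by (metis UNIV_I empty_iff insert_iff)
qed

lemma vec4_nth [simp]: "vec4 a b c d $ 0 = a" "vec4 a b c d $ 1 = b" "vec4 a b c d $ 2 = c"
    "vec4 a b c d $ 3 = d"
  unfolding vec4_def by simp_all

lemma vec4_eq_iff [simp]: "vec4 a b c d = vec4 a' b' c' d' \<longleftrightarrow> a = a' \<and> b = b' \<and> c = c' \<and> d = d'"
  unfolding vec_eq_iff forall_4 by simp

lemma neg_vec4 [simp]: "- vec4 a b c d = vec4 (- a) (- b) (- c) (- d)"
  unfolding vec_eq_iff forall_4 by simp

lemma vec4_eq_0_iff [simp]: "vec4 a b c d = 0 \<longleftrightarrow> a = 0 \<and> b = 0 \<and> c = 0 \<and> d = 0"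
  unfolding vec_eq_iff forall_4 by simp

text \<open>The nonzero zeros of the elliptic quadratic form \<open>Q x = x\<^sub>0\<^sup>2 + x\<^sub>1\<^sup>2 + x\<^sub>2 x\<^sub>3\<close>
  (\<open>x\<^sub>0\<^sup>2 + x\<^sub>1\<^sup>2\<close> is anisotropic as \<open>-1\<close> is not a square mod \<open>3\<close>). Since
  \<open>Q (- (x + y)) = Q x + Q y + B x y\<close> for the polar form \<open>B\<close>, and \<open>B x y \<noteq> 0\<close> for points
  \<open>x \<noteq> \<plusminus>y\<close> of this set, no three of them sum to zero.\<close>

definition quadric_cap :: "pt set" where
  "quadric_cap = {vec4 0 0 0 1, vec4 0 0 0 2, vec4 0 0 1 0, vec4 0 0 2 0, vec4 0 1 1 2,
    vec4 0 1 2 1, vec4 0 2 1 2, vec4 0 2 2 1, vec4 1 0 1 2, vec4 1 0 2 1, vec4 1 1 1 1,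
    vec4 1 1 2 2, vec4 1 2 1 1, vec4 1 2 2 2, vec4 2 0 1 2, vec4 2 0 2 1, vec4 2 1 1 1,
    vec4 2 1 2 2, vec4 2 2 1 1, vec4 2 2 2 2}"

definition quad :: "pt \<Rightarrow> 3" where
  "quad x = x $ 0 * x $ 0 + x $ 1 * x $ 1 + x $ 2 * x $ 3"

definition polar :: "pt \<Rightarrow> pt \<Rightarrow> 3" where
  "polar x y = 2 * x $ 0 * y $ 0 + 2 * x $ 1 * y $ 1 + x $ 2 * y $ 3 + x $ 3 * y $ 2"

lemma quad_minus_add: "quad (- (x + y)) = quad x + quad y + polar x y"
  unfolding quad_def polar_def by (simp add: algebra_simps)

lemma card_quadric_cap: "card quadric_cap = 20"
  unfolding quadric_cap_def by simp

lemma is_cap_quadric_cap: "is_cap quadric_cap"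
proof -
  have quad: "\<forall>x\<in>quadric_cap. quad x = 0 \<and> x \<noteq> 0"
    unfolding quadric_cap_def by (simp add: quad_def)
  have polar: "\<forall>x\<in>quadric_cap. \<forall>y\<in>quadric_cap. x \<noteq> y \<longrightarrow> x \<noteq> - y \<longrightarrow> polar x y \<noteq> 0"
    unfolding quadric_cap_def Ball_def insert_iff empty_iff by (simp add: polar_def)
  show ?thesis
    unfolding is_cap_def
  proof (intro allI impI notI)
    fix L assume "L \<subseteq> quadric_cap" and "is_line L"
    then obtain x y z where xyz: "x \<in> quadric_cap" "y \<in> quadric_cap" "z \<in> quadric_cap" "x \<noteq> y"
      and sum: "x + y + z = 0"
      unfolding is_line_def by blast
    have z: "z = - (x + y)" using sum by (simp add: add_eq_0_iff)
    then have "x \<noteq> - y" using quad xyz(3) by auto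
    moreover have "polar x y = 0" using quad xyz quad_minus_add[of x y] z by simp
    ultimately show False using polar xyz by blast
  qed
qed

section \<open>Anchored caps\<close>

lemma reflection_line:
  fixes S :: "pt set"
  assumes "p \<notin> S" "x \<in> S" "- p - x \<in> S"
  shows "x \<noteq> - p - x" and "is_line {p, x, - p - x}"
proof -
  show ne: "x \<noteq> - p - x"
  proof
    assume "x = - p - x"
    then have "x = p" by (simp only: pt_eq_neg_diff_iff)
    then show False using assms(1,2) by simp
  qed
  have "p \<noteq> x" using assms(1,2) by blast
  moreover have "p \<noteq> - p - x"
  proof
    assume "p = - p - x"
    from assms(3) this [symmetric] assms(1) show False by (simp only:)
  qed
  ultimately show "is_line {p, x, - p - x}" using ne by (simp add: is_line_insert_iff)
qed

lemma line_third_point: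
  assumes "is_line {p, x, y}"
  shows "y = - p - x"
proof -
  have "(p + x) + y = 0" using assms by (simp add: is_line_insert_iff)
  then show ?thesis by (simp add: add_eq_0_iff)
qed

lemma card_reflection_pairs:
  fixes S :: "pt set"
  assumes "p \<notin> S" and A: "A \<subseteq> {x\<in>S. - p - x \<in> S}" "\<And>x. x \<in> A \<Longrightarrow> - p - x \<in> A"
  shows "2 * card ((\<lambda>x. {x, - p - x}) ` A) = card A"
proof (rule card_involution_pairs)
  show "- p - x \<noteq> x" if "x \<in> A" for x
    using reflection_line(1)[OF assms(1)] that A(1) by (blast dest: sym)
qed (use A(2) in simp_all)

lemma lines_completed_eq_card:
  assumes "p \<notin> S"
  shows "2 * lines_completed p S = card {x\<in>S. - p - x \<in> S}"
proof -
  let ?A = "{x\<in>S. - p - x \<in> S}"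
  have "{P. \<exists>x y. P = {x, y} \<and> x \<in> S \<and> y \<in> S \<and> x \<noteq> y \<and> is_line {p, x, y}}
      = (\<lambda>x. {x, - p - x}) ` ?A"
  proof (rule set_eqI, rule iffI)
    fix P assume "P \<in> {P. \<exists>x y. P = {x, y} \<and> x \<in> S \<and> y \<in> S \<and> x \<noteq> y \<and> is_line {p, x, y}}"
    then obtain x y where P: "P = {x, y}" "x \<in> S" "y \<in> S" and line: "is_line {p, x, y}" by blast
    from line have "y = - p - x" by (rule line_third_point)
    then show "P \<in> (\<lambda>x. {x, - p - x}) ` ?A" using P by (intro image_eqI[of _ _ x]) auto
  next
    fix P assume "P \<in> (\<lambda>x. {x, - p - x}) ` ?A"
    then obtain x where x: "x \<in> S" "- p - x \<in> S" and P: "P = {x, - p - x}" by blast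
    then show "P \<in> {P. \<exists>x y. P = {x, y} \<and> x \<in> S \<and> y \<in> S \<and> x \<noteq> y \<and> is_line {p, x, y}}"
      using reflection_line[OF assms x] by blast
  qed
  moreover have "2 * card ((\<lambda>x. {x, - p - x}) ` ?A) = card ?A"
    using assms by (rule card_reflection_pairs) auto
  ultimately show ?thesis by (simp add: lines_completed_def)
qed

lemma anchor_reflect:
  assumes "is_anchor a C" "b \<in> C"
  shows "- a - b \<in> C"
proof -
  obtain P where P: "a_line a P" "P \<subseteq> C" "b \<in> P" using assms unfolding is_anchor_def by blast
  then obtain u v where uv: "P = {u, v}" "is_line {a, u, v}" unfolding a_line_def by blast
  then have "v = - a - u" "u = - a - v" using line_third_point by (auto simp: insert_commute)
  then show ?thesis using P uv(1) by auto
qed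

lemma anchored_a_lines:
  assumes "is_anchor a C"
  defines "S \<equiv> (\<lambda>b. {b, - a - b}) ` C"
  shows "(\<forall>P\<in>S. a_line a P) \<and> \<Union>S = C \<and> 2 * card S = card C"
proof (intro conjI)
  have a: "a \<notin> C" using assms(1) by (simp add: is_anchor_def)
  note reflect = anchor_reflect[OF assms(1)]
  show "\<forall>P\<in>S. a_line a P"
    unfolding S_def a_line_def using reflection_line[OF a] reflect by blast
  show "\<Union>S = C" using reflect by (auto simp: S_def)
  show "2 * card S = card C" unfolding S_def using a by (rule card_reflection_pairs) (auto simp: reflect)
qed

text \<open>Translating an anchored cap by \<open>- a\<close> moves the anchor to the origin; the reflection
  \<open>b \<mapsto> - a - b\<close> then becomes \<open>x \<mapsto> - x\<close> because \<open>3 a = 0\<close>.\<close>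

lemma symmetric_cap_translate_anchored:
  assumes "is_cap C" "is_anchor a C"
  shows "symmetric_cap ((\<lambda>x. x - a) ` C)"
proof
  show "is_cap ((\<lambda>x. x - a) ` C)" using is_cap_translate[OF assms(1), of "- a"] by simp
  show "0 \<notin> (\<lambda>x. x - a) ` C" using assms(2) by (auto simp: is_anchor_def)
  fix y assume "y \<in> (\<lambda>x. x - a) ` C"
  then obtain b where b: "b \<in> C" "y = b - a" by blast
  have "- y = (- a - b) - a" using b(2) by (simp add: algebra_simps pt_two)
  then show "- y \<in> (\<lambda>x. x - a) ` C" using anchor_reflect[OF assms(2) b(1)] by blast
qed

lemma card_reflection_pairs_translate:
  assumes "symmetric_cap ((\<lambda>x. x - a) ` C)"
  shows "card {x\<in>C. - p - x \<in> C} = card {y \<in> (\<lambda>x. x - a) ` C. (p - a) + y \<in> (\<lambda>x. x - a) ` C}"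
proof -
  let ?K = "(\<lambda>x. x - a) ` C"
  have mem: "z - a \<in> ?K \<longleftrightarrow> z \<in> C" for z by auto
  have "(p - a) + (x - a) = - ((- p - x) - a)" for x by (simp add: algebra_simps pt_two)
  then have "(p - a) + (x - a) \<in> ?K \<longleftrightarrow> - p - x \<in> C" for x
    using symmetric_cap.uminus_mem_iff[OF assms] mem by metis
  then have "{y \<in> ?K. (p - a) + y \<in> ?K} = (\<lambda>x. x - a) ` {x\<in>C. - p - x \<in> C}" by blast
  then show ?thesis by (simp add: card_image)
qed

theorem proposition3p1:
  fixes C :: "pt set" and a :: pt
  assumes "is_maximal_cap C" and "is_anchor a C"
  shows "(\<exists>S. card S = 10 \<and> (\<forall>P\<in>S. a_line a P) \<and> \<Union>S = C)
         \<and> (\<forall>p. p \<notin> C \<and> p \<noteq> a \<longrightarrow> lines_completed p C = 3)"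
proof -
  have cap: "is_cap C" and max: "card quadric_cap \<le> card C"
    using assms(1) is_cap_quadric_cap by (auto simp: is_maximal_cap_def)
  let ?K = "(\<lambda>x. x - a) ` C"
  interpret K: symmetric_cap ?K by (rule symmetric_cap_translate_anchored[OF cap assms(2)])
  have card_K: "card ?K = card C" by (simp add: card_image)
  have card_C: "card C = 20" using K.card_le_20 max card_K card_quadric_cap by simp
  have "\<exists>S. card S = 10 \<and> (\<forall>P\<in>S. a_line a P) \<and> \<Union>S = C"
    using anchored_a_lines[OF assms(2)] card_C by auto
  moreover have "lines_completed p C = 3" if p: "p \<notin> C" "p \<noteq> a" for p
  proof -
    have "p - a \<notin> ?K" "p - a \<noteq> 0" using p by auto
    then have "card {x\<in>C. - p - x \<in> C} = 6"
      using K.card_add_mem_eq_6 card_K card_C card_reflection_pairs_translate[OF K.symmetric_cap_axioms]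
      by simp
    then show ?thesis using lines_completed_eq_card[OF p(1)] by simp
  qed
  ultimately show ?thesis by blast
qed
end
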